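(* Let $I$ be any instance of the Partition problem with $n$ jobs, processing times $p_1\ge p_2\ge\dots\ge p_n>0$, optimal makespan $y^*$ and set of local optima $\mathcal{L}$. Let $\epsilon>0$ and $s:=\lceil 2/\epsilon\rceil-1\le n/2$; jobs $1,\dots,s$ are called large and the others small. Then: (1) for all $j\in\{s+1,\dots,n\}$, $p_j\le\frac{\epsilon}{2}\sum_{i=1}^n p_i$; (2) if at least one small job is assigned to the fuller machine of a solution $x\in\mathcal{L}$, then $x$ is a $(1+\epsilon)$ approximation; (3) if $\sum_{i=s+1}^n p_i\ge\frac12\sum_{i=1}^n p_i$, then every $x\in\mathcal{L}$ is a $(1+\epsilon)$ approximation; (4) $|\{y\in((1+\epsilon)y^*,\infty):\exists x\in\mathcal{L} \text{ with } f(x)=y\}|\le 2^{2/\epsilon}$.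
   Context: Partition problem: a solution $x\in\{0,1\}^n$ assigns job $i$ to machine $M_1$ if $x_i=0$ and to $M_2$ if $x_i=1$; the makespan $f(x)=\max\{\sum_i p_ix_i,\sum_i p_i(1-x_i)\}$ is minimised and $y^*=\min_x f(x)$. The fuller machine of $x$ is the machine whose load attains $f(x)$. A local optimum is a solution such that no solution at Hamming distance $1$ has strictly smaller makespan. A $(1+\epsilon)$ approximation is a solution $x$ with $f(x)\le(1+\epsilon)y^*$. *)

theory Defs
  imports "HOL-Library.FuncSet" Complex_Main
begin

text \<open>Jobs are indexed by 1..n, processing times p :: nat => real.
  A solution is x in {1..n} ->_E {0,1}; x i = 0 means machine M1, x i = 1 means M2.\<close>

definition solutions :: "nat \<Rightarrow> (nat \<Rightarrow> nat) set" where
  "solutions n = {1..n} \<rightarrow>\<^sub>E {0, 1}"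

definition load1 :: "(nat \<Rightarrow> real) \<Rightarrow> nat \<Rightarrow> (nat \<Rightarrow> nat) \<Rightarrow> real" where
  "load1 p n x = (\<Sum>i\<in>{1..n}. p i * (1 - real (x i)))"

definition load2 :: "(nat \<Rightarrow> real) \<Rightarrow> nat \<Rightarrow> (nat \<Rightarrow> nat) \<Rightarrow> real" where
  "load2 p n x = (\<Sum>i\<in>{1..n}. p i * real (x i))"

definition makespan :: "(nat \<Rightarrow> real) \<Rightarrow> nat \<Rightarrow> (nat \<Rightarrow> nat) \<Rightarrow> real" where
  "makespan p n x = max (load2 p n x) (load1 p n x)"

definition opt_makespan :: "(nat \<Rightarrow> real) \<Rightarrow> nat \<Rightarrow> real" where
  "opt_makespan p n = Min (makespan p n ` solutions n)"

definition hamming :: "nat \<Rightarrow> (nat \<Rightarrow> nat) \<Rightarrow> (nat \<Rightarrow> nat) \<Rightarrow> nat" where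
  "hamming n x y = card {i \<in> {1..n}. x i \<noteq> y i}"

definition local_optima :: "(nat \<Rightarrow> real) \<Rightarrow> nat \<Rightarrow> (nat \<Rightarrow> nat) set" where
  "local_optima p n = {x \<in> solutions n. \<forall>y \<in> solutions n.
      hamming n x y = 1 \<longrightarrow> \<not> makespan p n y < makespan p n x}"

definition on_fuller_machine :: "(nat \<Rightarrow> real) \<Rightarrow> nat \<Rightarrow> (nat \<Rightarrow> nat) \<Rightarrow> nat \<Rightarrow> bool" where
  "on_fuller_machine p n x j =
     ((x j = 0 \<and> load1 p n x = makespan p n x) \<or> (x j = 1 \<and> load2 p n x = makespan p n x))"

definition is_approx :: "(nat \<Rightarrow> real) \<Rightarrow> nat \<Rightarrow> real \<Rightarrow> (nat \<Rightarrow> nat) \<Rightarrow> bool" where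
  "is_approx p n \<epsilon> x = (makespan p n x \<le> (1 + \<epsilon>) * opt_makespan p n)"

end

theory Submission
  imports Defs
begin

text \<open>
  Moving a job j off the fuller machine of a local optimum x does not help, so
  2 f(x) \<le> P + p j, where P is the total processing time; also y* \<ge> P / 2.
  For sorted times j p j \<le> P, and a small job has j > s \<ge> 2/\<epsilon> - 1, so p j \<le> \<epsilon>/2 P:
  a local optimum with a small job on its fuller machine is therefore a (1+\<epsilon>)
  approximation. Otherwise its fuller machine carries only large jobs, so the makespan
  is the total time of some subset of {1..s}. That is at most P / 2 \<le> y* when the small
  jobs weigh at least half of P, and in any case it takes at most 2^s \<le> 2^(2/\<epsilon>) values.
\<close>

lemma solution_value_cases:
  "x \<in> solutions n \<Longrightarrow> i \<in> {1..n} \<Longrightarrow> x i = 0 \<or> x i = 1"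
  unfolding solutions_def by (auto simp: PiE_def Pi_def)

lemma finite_solutions: "finite (solutions n)"
  unfolding solutions_def by (simp add: finite_PiE)

lemma solutions_nonempty: "solutions n \<noteq> {}"
  unfolding solutions_def by (simp add: PiE_eq_empty_iff)

lemma load1_plus_load2: "load1 p n x + load2 p n x = (\<Sum>i\<in>{1..n}. p i)"
  unfolding load1_def load2_def by (simp add: sum.distrib[symmetric] algebra_simps)

lemma half_total_le_makespan: "(\<Sum>i\<in>{1..n}. p i) / 2 \<le> makespan p n x"
  using load1_plus_load2[of p n x] unfolding makespan_def by linarith

lemma half_total_le_opt_makespan: "(\<Sum>i\<in>{1..n}. p i) / 2 \<le> opt_makespan p n"
  unfolding opt_makespan_def
  using finite_solutions solutions_nonempty half_total_le_makespan by (intro Min.boundedI) blast+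

lemma sum_fun_upd_diff:
  fixes f :: "nat \<Rightarrow> nat \<Rightarrow> real"
  assumes "j \<in> {1..n}"
  shows "(\<Sum>i\<in>{1..n}. f i ((x(j := v)) i)) = (\<Sum>i\<in>{1..n}. f i (x i)) + f j v - f j (x j)"
proof -
  have "(\<Sum>i\<in>{1..n}. f i ((x(j := v)) i)) = f j v + (\<Sum>i\<in>{1..n}-{j}. f i ((x(j := v)) i))"
    using assms by (subst sum.remove[of _ j]) auto
  also have "(\<Sum>i\<in>{1..n}-{j}. f i ((x(j := v)) i)) = (\<Sum>i\<in>{1..n}-{j}. f i (x i))"
    by (intro sum.cong) auto
  also have "(\<Sum>i\<in>{1..n}-{j}. f i (x i)) = (\<Sum>i\<in>{1..n}. f i (x i)) - f j (x j)"
    using assms by (subst sum.remove[of _ j]) auto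
  finally show ?thesis by simp
qed

lemma load1_fun_upd:
  "j \<in> {1..n} \<Longrightarrow> load1 p n (x(j := v)) = load1 p n x + p j * (real (x j) - real v)"
  unfolding load1_def
  using sum_fun_upd_diff[of j n "\<lambda>i v. p i * (1 - real v)" x v] by (simp add: algebra_simps)

lemma load2_fun_upd:
  "j \<in> {1..n} \<Longrightarrow> load2 p n (x(j := v)) = load2 p n x + p j * (real v - real (x j))"
  unfolding load2_def
  using sum_fun_upd_diff[of j n "\<lambda>i v. p i * real v" x v] by (simp add: algebra_simps)

lemma flip_in_solutions:
  "x \<in> solutions n \<Longrightarrow> j \<in> {1..n} \<Longrightarrow> x(j := 1 - x j) \<in> solutions n"
  unfolding solutions_def by (auto simp: PiE_def Pi_def extensional_def)

lemma hamming_flip: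
  assumes "x \<in> solutions n" and "j \<in> {1..n}"
  shows "hamming n x (x(j := 1 - x j)) = 1"
proof -
  have "{i \<in> {1..n}. x i \<noteq> (x(j := 1 - x j)) i} = {j}"
    using assms solution_value_cases[OF assms] by auto
  then show ?thesis unfolding hamming_def by simp
qed

lemma local_optimum_fuller_job_bound:
  assumes x: "x \<in> local_optima p n" and j: "j \<in> {1..n}" and "p j > 0"
    and fuller: "on_fuller_machine p n x j"
  shows "2 * makespan p n x \<le> (\<Sum>i\<in>{1..n}. p i) + p j"
proof -
  have sol: "x \<in> solutions n" using x unfolding local_optima_def by simp
  define y where "y = x(j := 1 - x j)"
  have "y \<in> solutions n" and "hamming n x y = 1"
    unfolding y_def using flip_in_solutions[OF sol j] hamming_flip[OF sol j] by auto
  then have "makespan p n x \<le> makespan p n y"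
    using x unfolding local_optima_def by (auto simp: not_less)
  then have no_gain: "makespan p n x \<le> load1 p n y \<or> makespan p n x \<le> load2 p n y"
    unfolding makespan_def[of p n y] by (auto simp: le_max_iff_disj)
  have loads: "load1 p n y = load1 p n x + p j * (real (x j) - real (1 - x j))"
      "load2 p n y = load2 p n x + p j * (real (1 - x j) - real (x j))"
    unfolding y_def using load1_fun_upd[OF j] load2_fun_upd[OF j] by auto
  have "makespan p n x \<le> load1 p n x + load2 p n x - makespan p n x + p j"
    using solution_value_cases[OF sol j]
  proof
    assume "x j = 0"
    moreover from this fuller have "load1 p n x = makespan p n x"
      unfolding on_fuller_machine_def by simp
    ultimately show ?thesis using no_gain loads \<open>p j > 0\<close> by auto
  next
    assume "x j = 1"
    moreover from this fuller have "load2 p n x = makespan p n x"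
      unfolding on_fuller_machine_def by simp
    ultimately show ?thesis using no_gain loads \<open>p j > 0\<close> by auto
  qed
  then show ?thesis using load1_plus_load2[of p n x] by linarith
qed

lemma approx_if_small_job_on_fuller_machine:
  assumes "x \<in> local_optima p n" and "j \<in> {1..n}" and "p j > 0"
    and "on_fuller_machine p n x j" and "\<epsilon> \<ge> 0"
    and small: "p j \<le> \<epsilon> / 2 * (\<Sum>i\<in>{1..n}. p i)"
  shows "is_approx p n \<epsilon> x"
proof -
  define T where "T = (\<Sum>i\<in>{1..n}. p i)"
  have "2 * makespan p n x \<le> T + p j"
    unfolding T_def using local_optimum_fuller_job_bound assms by blast
  moreover have "\<epsilon> * T \<le> \<epsilon> * (2 * opt_makespan p n)"
    using half_total_le_opt_makespan[of p n] \<open>\<epsilon> \<ge> 0\<close> unfolding T_def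
    by (intro mult_left_mono) auto
  moreover have "T / 2 \<le> opt_makespan p n"
    unfolding T_def by (rule half_total_le_opt_makespan)
  ultimately show ?thesis
    using small \<open>p j > 0\<close> unfolding is_approx_def T_def by (simp add: algebra_simps)
qed

lemma sorted_index_mul_le_sum:
  fixes p :: "nat \<Rightarrow> real"
  assumes sorted: "\<And>i j. 1 \<le> i \<Longrightarrow> i \<le> j \<Longrightarrow> j \<le> n \<Longrightarrow> p j \<le> p i"
    and nonneg: "\<And>i. 1 \<le> i \<Longrightarrow> i \<le> n \<Longrightarrow> p i \<ge> 0"
    and "j \<le> n"
  shows "real j * p j \<le> (\<Sum>i\<in>{1..n}. p i)"
proof -
  have "real j * p j = (\<Sum>i\<in>{1..j}. p j)" by simp
  also have "\<dots> \<le> (\<Sum>i\<in>{1..j}. p i)"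
    using \<open>j \<le> n\<close> by (intro sum_mono sorted) auto
  also have "\<dots> \<le> (\<Sum>i\<in>{1..n}. p i)"
    using \<open>j \<le> n\<close> nonneg by (intro sum_mono2) auto
  finally show ?thesis .
qed

lemma makespan_eq_sum_fuller_jobs:
  assumes sol: "x \<in> solutions n"
  shows "\<exists>A \<subseteq> {1..n}. makespan p n x = sum p A \<and> (\<forall>j\<in>A. on_fuller_machine p n x j)"
proof (cases "load2 p n x \<le> load1 p n x")
  case True
  define A where "A = {i \<in> {1..n}. x i = 0}"
  have "load1 p n x = (\<Sum>i\<in>{1..n}. if x i = 0 then p i else 0)"
    unfolding load1_def
  proof (rule sum.cong)
    fix i assume "i \<in> {1..n}"
    then show "p i * (1 - real (x i)) = (if x i = 0 then p i else 0)"
      using solution_value_cases[OF sol, of i] by auto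
  qed simp
  also have "\<dots> = sum p A"
    unfolding A_def by (rule sum.inter_filter[symmetric]) simp
  finally have "makespan p n x = sum p A"
    using True unfolding makespan_def by simp
  moreover have "\<forall>j\<in>A. on_fuller_machine p n x j"
    using True unfolding A_def on_fuller_machine_def makespan_def by simp
  moreover have "A \<subseteq> {1..n}" unfolding A_def by auto
  ultimately show ?thesis by blast
next
  case False
  define A where "A = {i \<in> {1..n}. x i = 1}"
  have "load2 p n x = (\<Sum>i\<in>{1..n}. if x i = 1 then p i else 0)"
    unfolding load2_def
  proof (rule sum.cong)
    fix i assume "i \<in> {1..n}"
    then show "p i * real (x i) = (if x i = 1 then p i else 0)"
      using solution_value_cases[OF sol, of i] by auto
  qed simp
  also have "\<dots> = sum p A"
    unfolding A_def by (rule sum.inter_filter[symmetric]) simp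
  finally have "makespan p n x = sum p A"
    using False unfolding makespan_def by simp
  moreover have "\<forall>j\<in>A. on_fuller_machine p n x j"
    using False unfolding A_def on_fuller_machine_def makespan_def by simp
  moreover have "A \<subseteq> {1..n}" unfolding A_def by auto
  ultimately show ?thesis by blast
qed

lemma non_approx_makespan_eq_sum_large_jobs:
  assumes pos: "\<And>i. 1 \<le> i \<Longrightarrow> i \<le> n \<Longrightarrow> p i > 0" and "\<epsilon> \<ge> 0"
    and small: "\<forall>j \<in> {s+1..n}. p j \<le> \<epsilon> / 2 * (\<Sum>i\<in>{1..n}. p i)"
    and x: "x \<in> local_optima p n" and "\<not> is_approx p n \<epsilon> x"
  shows "\<exists>A \<subseteq> {1..s}. makespan p n x = sum p A"
proof -
  have "x \<in> solutions n" using x unfolding local_optima_def by simp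
  then obtain A where A: "A \<subseteq> {1..n}" "makespan p n x = sum p A"
    and fuller: "\<forall>j\<in>A. on_fuller_machine p n x j"
    using makespan_eq_sum_fuller_jobs by blast
  have "A \<subseteq> {1..s}"
  proof
    fix j assume "j \<in> A"
    with A(1) have j: "j \<in> {1..n}" by blast
    show "j \<in> {1..s}"
    proof (rule ccontr)
      assume "j \<notin> {1..s}"
      with j small have "p j \<le> \<epsilon> / 2 * (\<Sum>i\<in>{1..n}. p i)" by auto
      moreover have "p j > 0" using pos j by simp
      ultimately have "is_approx p n \<epsilon> x"
        using approx_if_small_job_on_fuller_machine[OF x j] fuller \<open>j \<in> A\<close> \<open>\<epsilon> \<ge> 0\<close> by blast
      with \<open>\<not> is_approx p n \<epsilon> x\<close> show False ..
    qed
  qed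
  with A(2) show ?thesis by blast
qed

lemma small_job_le:
  fixes p :: "nat \<Rightarrow> real"
  assumes sorted: "\<And>i j. 1 \<le> i \<Longrightarrow> i \<le> j \<Longrightarrow> j \<le> n \<Longrightarrow> p j \<le> p i"
    and nonneg: "\<And>i. 1 \<le> i \<Longrightarrow> i \<le> n \<Longrightarrow> p i \<ge> 0"
    and "\<epsilon> > 0" and "2 / \<epsilon> \<le> real j" and "j \<le> n"
  shows "p j \<le> \<epsilon> / 2 * (\<Sum>i\<in>{1..n}. p i)"
proof -
  have "0 \<le> p j"
    using \<open>\<epsilon> > 0\<close> \<open>2 / \<epsilon> \<le> real j\<close> \<open>j \<le> n\<close> nonneg[of j]
    by (cases j) (auto simp: field_simps)
  then have "2 / \<epsilon> * p j \<le> real j * p j"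
    using \<open>2 / \<epsilon> \<le> real j\<close> by (intro mult_right_mono)
  also have "\<dots> \<le> (\<Sum>i\<in>{1..n}. p i)"
    using sorted_index_mul_le_sum[OF sorted nonneg \<open>j \<le> n\<close>] .
  finally show ?thesis
    using \<open>\<epsilon> > 0\<close> by (simp add: field_simps)
qed

lemma approx_if_small_jobs_heavy:
  assumes pos: "\<And>i. 1 \<le> i \<Longrightarrow> i \<le> n \<Longrightarrow> p i > 0" and "\<epsilon> \<ge> 0" and "s \<le> n"
    and small: "\<forall>j \<in> {s+1..n}. p j \<le> \<epsilon> / 2 * (\<Sum>i\<in>{1..n}. p i)"
    and heavy: "(\<Sum>i\<in>{s+1..n}. p i) \<ge> (1/2) * (\<Sum>i\<in>{1..n}. p i)"
    and x: "x \<in> local_optima p n"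
  shows "is_approx p n \<epsilon> x"
proof (rule ccontr)
  assume "\<not> is_approx p n \<epsilon> x"
  then obtain A where "A \<subseteq> {1..s}" and ms: "makespan p n x = sum p A"
    using non_approx_makespan_eq_sum_large_jobs[OF pos \<open>\<epsilon> \<ge> 0\<close> small x] by blast
  have "sum p A \<le> (\<Sum>i\<in>{1..s}. p i)"
    using \<open>A \<subseteq> {1..s}\<close> \<open>s \<le> n\<close> pos by (intro sum_mono2) (auto intro: less_imp_le)
  also have "(\<Sum>i\<in>{1..s}. p i) = (\<Sum>i\<in>{1..n}. p i) - (\<Sum>i\<in>{s+1..n}. p i)"
    using sum.atLeastLessThan_concat[of 1 "s+1" "n+1" p] \<open>s \<le> n\<close>
    by (simp add: atLeastLessThanSuc_atLeastAtMost)
  also have "\<dots> \<le> opt_makespan p n"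
    using heavy half_total_le_opt_makespan[of p n] by simp
  finally have "makespan p n x \<le> opt_makespan p n" using ms by simp
  moreover have "0 \<le> (\<Sum>i\<in>{1..n}. p i)"
    using pos by (intro sum_nonneg) (auto intro: less_imp_le)
  then have "0 \<le> opt_makespan p n"
    using half_total_le_opt_makespan[of p n] by linarith
  moreover from this have "0 \<le> \<epsilon> * opt_makespan p n"
    using \<open>\<epsilon> \<ge> 0\<close> by simp
  ultimately have "is_approx p n \<epsilon> x"
    unfolding is_approx_def by (simp add: distrib_right)
  with \<open>\<not> is_approx p n \<epsilon> x\<close> show False ..
qed

lemma card_non_approx_makespans_le:
  assumes pos: "\<And>i. 1 \<le> i \<Longrightarrow> i \<le> n \<Longrightarrow> p i > 0" and "\<epsilon> \<ge> 0"
    and small: "\<forall>j \<in> {s+1..n}. p j \<le> \<epsilon> / 2 * (\<Sum>i\<in>{1..n}. p i)"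
  shows "card {y. y > (1 + \<epsilon>) * opt_makespan p n \<and>
                  (\<exists>x \<in> local_optima p n. makespan p n x = y)} \<le> 2 ^ s"
proof -
  have "{y. y > (1 + \<epsilon>) * opt_makespan p n \<and> (\<exists>x \<in> local_optima p n. makespan p n x = y)}
      \<subseteq> sum p ` Pow {1..s}"
    using non_approx_makespan_eq_sum_large_jobs[OF pos \<open>\<epsilon> \<ge> 0\<close> small]
    unfolding is_approx_def by (fastforce simp: not_le)
  then have "card {y. y > (1 + \<epsilon>) * opt_makespan p n \<and>
                  (\<exists>x \<in> local_optima p n. makespan p n x = y)} \<le> card (sum p ` Pow {1..s})"
    by (intro card_mono) auto
  also have "\<dots> \<le> card (Pow {1..s})" by (rule card_image_le) simp
  finally show ?thesis by (simp add: card_Pow)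
qed

theorem mainTheorem13:
  fixes p :: "nat \<Rightarrow> real" and n s :: nat and \<epsilon> :: real
  assumes sorted: "\<And>i j. 1 \<le> i \<Longrightarrow> i \<le> j \<Longrightarrow> j \<le> n \<Longrightarrow> p j \<le> p i"
    and pos: "\<And>i. 1 \<le> i \<Longrightarrow> i \<le> n \<Longrightarrow> p i > 0"
    and eps: "\<epsilon> > 0"
    and s_def: "int s = \<lceil>2 / \<epsilon>\<rceil> - 1"
    and s_le: "real s \<le> real n / 2"
  shows "(\<forall>j \<in> {s+1..n}. p j \<le> \<epsilon> / 2 * (\<Sum>i\<in>{1..n}. p i))
    \<and> (\<forall>x \<in> local_optima p n. (\<exists>j \<in> {s+1..n}. on_fuller_machine p n x j)
          \<longrightarrow> is_approx p n \<epsilon> x)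
    \<and> ((\<Sum>i\<in>{s+1..n}. p i) \<ge> (1/2) * (\<Sum>i\<in>{1..n}. p i)
          \<longrightarrow> (\<forall>x \<in> local_optima p n. is_approx p n \<epsilon> x))
    \<and> real (card {y. y > (1 + \<epsilon>) * opt_makespan p n \<and>
                     (\<exists>x \<in> local_optima p n. makespan p n x = y)}) \<le> 2 powr (2 / \<epsilon>)"
proof -
  have "\<lceil>2 / \<epsilon>\<rceil> = int s + 1" using s_def by simp
  then have s_ge: "2 / \<epsilon> \<le> real s + 1" and s_lt: "real s < 2 / \<epsilon>"
    by (simp_all add: ceiling_eq_iff)
  have small: "\<forall>j \<in> {s+1..n}. p j \<le> \<epsilon> / 2 * (\<Sum>i\<in>{1..n}. p i)"
  proof
    fix j assume "j \<in> {s+1..n}"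
    then have "2 / \<epsilon> \<le> real j" and "j \<le> n" using s_ge by auto
    then show "p j \<le> \<epsilon> / 2 * (\<Sum>i\<in>{1..n}. p i)"
      using pos by (intro small_job_le[OF sorted _ eps]) (auto intro: less_imp_le)
  qed
  have fuller: "\<forall>x \<in> local_optima p n. (\<exists>j \<in> {s+1..n}. on_fuller_machine p n x j)
          \<longrightarrow> is_approx p n \<epsilon> x"
  proof (intro ballI impI)
    fix x assume x: "x \<in> local_optima p n" and "\<exists>j \<in> {s+1..n}. on_fuller_machine p n x j"
    then obtain j where j: "j \<in> {s+1..n}" and on: "on_fuller_machine p n x j" by blast
    have "j \<in> {1..n}" and "p j > 0" using j pos by auto
    moreover have "p j \<le> \<epsilon> / 2 * (\<Sum>i\<in>{1..n}. p i)" using small j by blast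
    ultimately show "is_approx p n \<epsilon> x"
      using approx_if_small_job_on_fuller_machine[OF x _ _ on less_imp_le[OF eps]] by blast
  qed
  have heavy: "(\<Sum>i\<in>{s+1..n}. p i) \<ge> (1/2) * (\<Sum>i\<in>{1..n}. p i)
          \<longrightarrow> (\<forall>x \<in> local_optima p n. is_approx p n \<epsilon> x)"
    using approx_if_small_jobs_heavy[OF pos _ _ small] eps s_le by simp
  have "card {y. y > (1 + \<epsilon>) * opt_makespan p n \<and>
                 (\<exists>x \<in> local_optima p n. makespan p n x = y)} \<le> 2 ^ s"
    using card_non_approx_makespans_le[OF pos _ small] eps by simp
  then have "real (card {y. y > (1 + \<epsilon>) * opt_makespan p n \<and>
                 (\<exists>x \<in> local_optima p n. makespan p n x = y)}) \<le> 2 ^ s"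
    by (simp add: of_nat_le_iff[symmetric])
  also have "(2::real) ^ s \<le> 2 powr (2 / \<epsilon>)"
    using s_lt by (simp add: powr_realpow[symmetric])
  finally show ?thesis using small fuller heavy by blast
qed

end
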